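(* Let $K$ be a fractal gasket with $\{\omega_\alpha,\omega_\beta,\omega_\gamma\}\subset K$ satisfying the top isolated condition. Then its topology automaton $M_K$ satisfies the $\gamma$-isolated condition.
   Context: Let $\Delta\subset\mathbb R^2$ be the triangle with vertices $\omega_\alpha=(0,0)$, $\omega_\beta=(1,0)$, $\omega_\gamma=(1/2,\sqrt3/2)$. A fractal gasket is the attractor $K$ of $\{\varphi_j(z)=r_j(z+d_j)\}_{j=1}^N$, $r_j\in(0,1)$, $d_j\in\mathbb R^2$, with $\bigcup_j\varphi_j(\Delta)\subset\Delta$ and, for $i\ne j$, $\varphi_i(\Delta)\cap\varphi_j(\Delta)$ consisting only of common vertices. $\Sigma=\{1,\dots,N\}$; $\alpha=-1$ if $(0,0)\notin K$, else $\varphi_\alpha((0,0))=(0,0)$; $\beta=-2$ or $\varphi_\beta$ fixes $(1,0)$; $\gamma=-3$ or $\varphi_\gamma$ fixes $\omega_\gamma$. Top isolated condition: $\omega_\gamma\in K$ and $\varphi_\gamma(\Delta)\cap\varphi_j(\Delta)=\emptyset$ for all $j\ne\gamma$. Topology automaton $M_K$: the automaton with states $S_{uv}$ ($u\ne v\in\{\alpha,\beta,\gamma\}$), $Id$, $Exit$, input alphabet $\Sigma^2$, $\delta(Id,(i,i))=Id$, and for $i\ne j$: $\delta(Id,(i,j))=S_{uv}$ if $u,v\in\Sigma$ and $\varphi_i(\omega_v)=\varphi_j(\omega_u)$, $\delta(Id,(i,j))=Exit$ if $\varphi_i(K)\cap\varphi_j(K)=\emptyset$; $\delta(S_{uv},(i,j))=S_{uv}$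 if $(i,j)=(v,u)$, else $Exit$. $\mathcal P_{uv}=\{(i,j):\delta(Id,(i,j))=S_{uv}\}$; $i\triangleleft_{uv}j$ iff $(i,j)\in\mathcal P_{uv}$ (iff $j\triangleleft_{vu}i$); $j$ is $uv$-isolated if there is neither $i$ with $i\triangleleft_{uv}j$ nor $k$ with $j\triangleleft_{uv}k$. $\gamma$-isolated condition: $\alpha,\beta,\gamma\in\Sigma$; the directed graph on $\Sigma$ with edges $\mathcal P_{\alpha\gamma}\cup\mathcal P_{\beta\gamma}$ has no directed cycle; $\gamma$ is $\alpha\gamma$-, $\beta\gamma$- and $\alpha\beta$-isolated. *)

theory Defs
  imports "HOL-Analysis.Analysis"
begin

text \<open>The plane R^2 is modelled by the complex numbers (x,y) = x + i y.
  The three vertex labels alpha, beta, gamma of the triangle Delta.\<close>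

datatype vlabel = VA | VB | VG

fun omega :: "vlabel \<Rightarrow> complex" where
  "omega VA = 0"
| "omega VB = 1"
| "omega VG = Complex (1/2) (sqrt 3 / 2)"

definition tri_vertices :: "complex set" where
  "tri_vertices = {omega VA, omega VB, omega VG}"

definition tri :: "complex set" where
  "tri = convex hull tri_vertices"

definition alph :: "int \<Rightarrow> int set" where
  "alph N = {1..N}"

definition gmap :: "(int \<Rightarrow> real) \<Rightarrow> (int \<Rightarrow> complex) \<Rightarrow> int \<Rightarrow> complex \<Rightarrow> complex" where
  "gmap r d j z = of_real (r j) * (z + d j)"

definition fractal_gasket :: "int \<Rightarrow> (int \<Rightarrow> real) \<Rightarrow> (int \<Rightarrow> complex) \<Rightarrow> complex set \<Rightarrow> bool" where
  "fractal_gasket N r d K \<longleftrightarrow>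
     1 \<le> N \<and>
     (\<forall>j\<in>alph N. 0 < r j \<and> r j < 1) \<and>
     (\<Union>j\<in>alph N. gmap r d j ` tri) \<subseteq> tri \<and>
     (\<forall>i\<in>alph N. \<forall>j\<in>alph N. i \<noteq> j \<longrightarrow>
        gmap r d i ` tri \<inter> gmap r d j ` tri \<subseteq> gmap r d i ` tri_vertices \<inter> gmap r d j ` tri_vertices) \<and>
     compact K \<and> K \<noteq> {} \<and> K = (\<Union>j\<in>alph N. gmap r d j ` K)"

fun default_idx :: "vlabel \<Rightarrow> int" where
  "default_idx VA = -1"
| "default_idx VB = -2"
| "default_idx VG = -3"

definition idx :: "int \<Rightarrow> (int \<Rightarrow> real) \<Rightarrow> (int \<Rightarrow> complex) \<Rightarrow> complex set \<Rightarrow> vlabel \<Rightarrow> int" where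
  "idx N r d K v = (if omega v \<in> K
       then (THE j. j \<in> alph N \<and> gmap r d j (omega v) = omega v)
       else default_idx v)"

definition top_isolated :: "int \<Rightarrow> (int \<Rightarrow> real) \<Rightarrow> (int \<Rightarrow> complex) \<Rightarrow> complex set \<Rightarrow> bool" where
  "top_isolated N r d K \<longleftrightarrow> omega VG \<in> K \<and>
     (\<forall>j\<in>alph N. j \<noteq> idx N r d K VG \<longrightarrow>
        gmap r d (idx N r d K VG) ` tri \<inter> gmap r d j ` tri = {})"

datatype state = S vlabel vlabel | Id | Exit

definition delta_Id_to_S :: "int \<Rightarrow> (int \<Rightarrow> real) \<Rightarrow> (int \<Rightarrow> complex) \<Rightarrow> complex set
    \<Rightarrow> vlabel \<Rightarrow> vlabel \<Rightarrow> int \<Rightarrow> int \<Rightarrow> bool" where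
  "delta_Id_to_S N r d K u v i j \<longleftrightarrow>
     i \<in> alph N \<and> j \<in> alph N \<and> i \<noteq> j \<and> u \<noteq> v \<and>
     idx N r d K u \<in> alph N \<and> idx N r d K v \<in> alph N \<and>
     gmap r d i (omega v) = gmap r d j (omega u)"

definition Puv :: "int \<Rightarrow> (int \<Rightarrow> real) \<Rightarrow> (int \<Rightarrow> complex) \<Rightarrow> complex set
    \<Rightarrow> vlabel \<Rightarrow> vlabel \<Rightarrow> (int \<times> int) set" where
  "Puv N r d K u v = {(i, j). delta_Id_to_S N r d K u v i j}"

definition uv_isolated :: "int \<Rightarrow> (int \<Rightarrow> real) \<Rightarrow> (int \<Rightarrow> complex) \<Rightarrow> complex set
    \<Rightarrow> vlabel \<Rightarrow> vlabel \<Rightarrow> int \<Rightarrow> bool" where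
  "uv_isolated N r d K u v j \<longleftrightarrow>
     \<not> (\<exists>i. (i, j) \<in> Puv N r d K u v) \<and> \<not> (\<exists>k. (j, k) \<in> Puv N r d K u v)"

definition gamma_isolated :: "int \<Rightarrow> (int \<Rightarrow> real) \<Rightarrow> (int \<Rightarrow> complex) \<Rightarrow> complex set \<Rightarrow> bool" where
  "gamma_isolated N r d K \<longleftrightarrow>
     idx N r d K VA \<in> alph N \<and> idx N r d K VB \<in> alph N \<and> idx N r d K VG \<in> alph N \<and>
     acyclic (Puv N r d K VA VG \<union> Puv N r d K VB VG) \<and>
     uv_isolated N r d K VA VG (idx N r d K VG) \<and>
     uv_isolated N r d K VB VG (idx N r d K VG) \<and>
     uv_isolated N r d K VA VB (idx N r d K VG)"

end

theory Submission
  imports Defs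
begin

(* Each vertex of the triangle that lies in K is fixed by exactly one map. It is fixed by some map
   because a vertex is an extreme point of the triangle and K lies in the triangle; it is fixed by
   at most one because two maps fixing a common point are homotheties about it, so the smaller cell
   lies inside the larger one, and cells overlap in vertices only. The relations P_{alpha gamma} and
   P_{beta gamma} glue the top vertex of one cell to a bottom vertex of another, so the height of the
   bottom edge of the cell strictly increases along them and they are acyclic. Finally, the top cell
   meets no other cell, so it shares no vertex with any. *)

lemma attractor_subset_closed_invariant:
  fixes C K :: "'a::heine_borel set"
  assumes "closed C" "C \<noteq> {}" "compact K"
    and K_eq: "K = (\<Union>j\<in>I. f j ` K)"
    and maps_into: "\<And>j. j \<in> I \<Longrightarrow> f j ` C \<subseteq> C"
    and shrinks: "\<And>j x y. j \<in> I \<Longrightarrow> x \<noteq> y \<Longrightarrow> dist (f j x) (f j y) < dist x y"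
  shows "K \<subseteq> C"
proof (cases "K = {}")
  case False
  have "continuous_on K (\<lambda>x. infdist x C)"
    by (intro continuous_on_infdist continuous_on_id)
  then obtain x0 where "x0 \<in> K" and x0_max: "\<And>x. x \<in> K \<Longrightarrow> infdist x C \<le> infdist x0 C"
    using continuous_attains_sup[OF \<open>compact K\<close> False] by blast
  then obtain j y where "j \<in> I" "y \<in> K" and x0_eq: "x0 = f j y"
    using K_eq by blast
  have "x0 \<in> C"
  proof (rule ccontr)
    assume "x0 \<notin> C"
    then have "y \<notin> C"
      using maps_into[OF \<open>j \<in> I\<close>] x0_eq by blast
    obtain p where "p \<in> C" and p_nearest: "infdist y C = dist y p"
      using infdist_attains_inf[OF \<open>closed C\<close> \<open>C \<noteq> {}\<close>] by blast
    have "infdist x0 C \<le> dist (f j y) (f j p)"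
      using maps_into[OF \<open>j \<in> I\<close>] \<open>p \<in> C\<close> x0_eq infdist_le by blast
    also have "\<dots> < dist y p"
      using shrinks \<open>j \<in> I\<close> \<open>p \<in> C\<close> \<open>y \<notin> C\<close> by metis
    also have "\<dots> \<le> infdist x0 C"
      using x0_max[OF \<open>y \<in> K\<close>] p_nearest by simp
    finally show False by simp
  qed
  then have "infdist x C = 0" if "x \<in> K" for x
    using x0_max[OF that] infdist_nonneg[of x C]
      in_closed_iff_infdist_zero[OF \<open>closed C\<close> \<open>C \<noteq> {}\<close>] by auto
  then show ?thesis
    using in_closed_iff_infdist_zero[OF \<open>closed C\<close> \<open>C \<noteq> {}\<close>] by blast
qed simp

lemma extreme_point_eq_if_extension_in:
  fixes x y :: "'a::real_vector"
  assumes "x extreme_point_of C" "y \<in> C" "x + r *\<^sub>R (x - y) \<in> C" "0 < r"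
  shows "y = x"
proof (rule ccontr)
  assume "y \<noteq> x"
  define z where "z = x + r *\<^sub>R (x - y)"
  have "x = (1 - r / (1 + r)) *\<^sub>R z + (r / (1 + r)) *\<^sub>R y"
    using \<open>0 < r\<close>
    by (simp add: z_def field_simps scaleR_add_right scaleR_diff_right flip: scaleR_add_left)
  moreover have "z - y = (1 + r) *\<^sub>R (x - y)"
    by (simp add: z_def algebra_simps)
  then have "z \<noteq> y"
    using \<open>y \<noteq> x\<close> \<open>0 < r\<close> by auto
  ultimately have "x \<in> open_segment z y"
    using \<open>0 < r\<close> by (auto simp: in_segment intro!: exI[of _ "r / (1 + r)"])
  then show False
    using assms(1-3) unfolding extreme_point_of_def z_def by blast
qed

lemma homothety_image_mono:
  fixes p :: "'a::real_vector"
  assumes "convex C" "p \<in> C" "0 \<le> s" "s \<le> t"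
  shows "(\<lambda>z. p + s *\<^sub>R (z - p)) ` C \<subseteq> (\<lambda>z. p + t *\<^sub>R (z - p)) ` C"
proof
  fix w assume "w \<in> (\<lambda>z. p + s *\<^sub>R (z - p)) ` C"
  then obtain z where "z \<in> C" and w_eq: "w = p + s *\<^sub>R (z - p)" by blast
  show "w \<in> (\<lambda>z. p + t *\<^sub>R (z - p)) ` C"
  proof (cases "t = 0")
    case True
    then show ?thesis using assms w_eq by (auto simp: rev_image_eqI)
  next
    case False
    have "(1 - s / t) *\<^sub>R p + (s / t) *\<^sub>R z \<in> C"
      using convexD[OF assms(1) \<open>p \<in> C\<close> \<open>z \<in> C\<close>] assms False by simp
    moreover have "w = p + t *\<^sub>R (((1 - s / t) *\<^sub>R p + (s / t) *\<^sub>R z) - p)"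
      using False by (simp add: w_eq algebra_simps)
    ultimately show ?thesis by blast
  qed
qed

lemma omega_extreme_point: "omega v extreme_point_of tri"
proof -
  have "\<not> collinear tri_vertices"
    unfolding tri_vertices_def by (auto simp: collinear_lemma complex_eq_iff)
  then have "\<not> affine_dependent tri_vertices"
    using collinear_3_eq_affine_dependent unfolding tri_vertices_def by blast
  then show ?thesis
    unfolding tri_def
    by (simp add: extreme_point_of_convex_hull_affine_independent) (cases v; simp add: tri_vertices_def)
qed

lemma omega_in_tri: "omega v \<in> tri"
  using omega_extreme_point extreme_point_of_def by blast

lemma convex_tri: "convex tri"
  unfolding tri_def by (rule convex_convex_hull)

lemma compact_tri: "compact tri"
  unfolding tri_def tri_vertices_def by (rule finite_imp_compact_convex_hull) simp

lemma gmap_diff: "gmap r d j z - gmap r d j w = r j *\<^sub>R (z - w)"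
  by (simp add: gmap_def scaleR_conv_of_real algebra_simps)

lemma gmap_about_fixed_point:
  assumes "gmap r d j p = p"
  shows "gmap r d j = (\<lambda>z. p + r j *\<^sub>R (z - p))"
  using gmap_diff[of r d j _ p] assms by (simp add: fun_eq_iff algebra_simps)

lemma inj_gmap:
  assumes "r j \<noteq> 0"
  shows "inj (gmap r d j)"
proof (rule injI)
  fix z w assume "gmap r d j z = gmap r d j w"
  then show "z = w"
    using gmap_diff[of r d j z w] assms by simp
qed

lemma fractal_gasket_ratio:
  assumes "fractal_gasket N r d K" "j \<in> alph N"
  shows "0 < r j" "r j < 1"
  using assms unfolding fractal_gasket_def by auto

lemma fractal_gasket_maps_into_tri:
  assumes "fractal_gasket N r d K" "j \<in> alph N"
  shows "gmap r d j ` tri \<subseteq> tri"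
  using assms unfolding fractal_gasket_def by auto

lemma fractal_gasket_cells_meet_in_vertices:
  assumes "fractal_gasket N r d K" "i \<in> alph N" "j \<in> alph N" "i \<noteq> j"
  shows "gmap r d i ` tri \<inter> gmap r d j ` tri \<subseteq> gmap r d i ` tri_vertices"
  using assms unfolding fractal_gasket_def by auto

lemma fractal_gasket_self_similar:
  assumes "fractal_gasket N r d K" "x \<in> K"
  obtains j y where "j \<in> alph N" "y \<in> K" "x = gmap r d j y"
proof -
  have "K \<subseteq> (\<Union>j\<in>alph N. gmap r d j ` K)"
    using assms(1) unfolding fractal_gasket_def by (elim conjE) (erule equalityD1)
  then show ?thesis
    using assms(2) that by blast
qed

lemma fractal_gasket_subset_tri:
  assumes "fractal_gasket N r d K"
  shows "K \<subseteq> tri"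
proof (rule attractor_subset_closed_invariant)
  show "closed tri" "tri \<noteq> {}"
    using compact_tri omega_in_tri compact_imp_closed by blast+
  show "compact K" "K = (\<Union>j\<in>alph N. gmap r d j ` K)"
    using assms unfolding fractal_gasket_def by auto
  show "\<And>j. j \<in> alph N \<Longrightarrow> gmap r d j ` tri \<subseteq> tri"
    using fractal_gasket_maps_into_tri[OF assms] .
  fix j and z w :: complex
  assume "j \<in> alph N" "z \<noteq> w"
  moreover have "dist (gmap r d j z) (gmap r d j w) = \<bar>r j\<bar> * dist z w"
    by (simp add: dist_norm gmap_diff)
  ultimately show "dist (gmap r d j z) (gmap r d j w) < dist z w"
    using fractal_gasket_ratio[OF assms \<open>j \<in> alph N\<close>] by simp
qed

lemma fractal_gasket_fixed_point_unique:
  assumes gasket: "fractal_gasket N r d K" and "p \<in> tri"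
    and "j \<in> alph N" "k \<in> alph N" "gmap r d j p = p" "gmap r d k p = p"
  shows "j = k"
proof -
  have smaller_eq_larger: "i = l"
    if "i \<in> alph N" "l \<in> alph N" "gmap r d i p = p" "gmap r d l p = p" "r i \<le> r l" for i l
  proof (rule ccontr)
    assume "i \<noteq> l"
    have "0 < r i"
      using fractal_gasket_ratio[OF gasket \<open>i \<in> alph N\<close>] by simp
    then have "gmap r d i ` tri \<subseteq> gmap r d l ` tri"
      using homothety_image_mono[OF convex_tri \<open>p \<in> tri\<close>, of "r i" "r l"] \<open>r i \<le> r l\<close>
      unfolding gmap_about_fixed_point[OF that(3)] gmap_about_fixed_point[OF that(4)] by simp
    then have "gmap r d i ` tri \<subseteq> gmap r d i ` tri_vertices"
      using fractal_gasket_cells_meet_in_vertices[OF gasket that(1,2) \<open>i \<noteq> l\<close>] by blast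
    then have "tri \<subseteq> tri_vertices"
      using inj_gmap[of r i d] \<open>0 < r i\<close> by (simp add: inj_image_subset_iff)
    moreover have "1/2 \<in> tri"
      using convexD[OF convex_tri omega_in_tri omega_in_tri, of "1/2" "1/2" VA VB]
      by (simp add: scaleR_conv_of_real)
    moreover have "1/2 \<notin> tri_vertices"
      by (simp add: tri_vertices_def complex_eq_iff)
    ultimately show False
      by blast
  qed
  show ?thesis
  proof (cases "r j \<le> r k")
    case True
    then show ?thesis using smaller_eq_larger assms(3-6) by blast
  next
    case False
    then show ?thesis using smaller_eq_larger[of k j] assms(3-6) by simp
  qed
qed

lemma fractal_gasket_vertex_fixed:
  assumes gasket: "fractal_gasket N r d K" and "omega v \<in> K"
  obtains j where "j \<in> alph N" "gmap r d j (omega v) = omega v"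
proof -
  obtain j y where "j \<in> alph N" "y \<in> K" and vertex_eq: "omega v = gmap r d j y"
    using fractal_gasket_self_similar[OF assms] by blast
  have "gmap r d j (omega v) = omega v + r j *\<^sub>R (omega v - y)"
    using gmap_diff[of r d j "omega v" y] vertex_eq by (simp add: algebra_simps)
  moreover have "gmap r d j (omega v) \<in> tri"
    using fractal_gasket_maps_into_tri[OF gasket \<open>j \<in> alph N\<close>] omega_in_tri by blast
  moreover have "y \<in> tri"
    using fractal_gasket_subset_tri[OF gasket] \<open>y \<in> K\<close> by blast
  ultimately have "y = omega v"
    using extreme_point_eq_if_extension_in[OF omega_extreme_point]
      fractal_gasket_ratio(1)[OF gasket \<open>j \<in> alph N\<close>] by simp
  then show ?thesis
    using that \<open>j \<in> alph N\<close> vertex_eq by simp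
qed

lemma idx_fixes_vertex:
  assumes gasket: "fractal_gasket N r d K" and "omega v \<in> K"
  shows "idx N r d K v \<in> alph N" "gmap r d (idx N r d K v) (omega v) = omega v"
proof -
  have "\<exists>!j. j \<in> alph N \<and> gmap r d j (omega v) = omega v"
    using fractal_gasket_vertex_fixed[OF assms]
      fractal_gasket_fixed_point_unique[OF gasket omega_in_tri] by blast
  from theI'[OF this]
  show "idx N r d K v \<in> alph N" "gmap r d (idx N r d K v) (omega v) = omega v"
    unfolding idx_def using \<open>omega v \<in> K\<close> by simp_all
qed

lemma Puv_VG_base_height_less:
  assumes "fractal_gasket N r d K" "(i, j) \<in> Puv N r d K u VG"
  shows "Im (gmap r d i 0) < Im (gmap r d j 0)"
proof -
  have "i \<in> alph N" "u \<noteq> VG" and meet: "gmap r d i (omega VG) = gmap r d j (omega u)"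
    using assms(2) unfolding Puv_def delta_Id_to_S_def by auto
  have "Im (gmap r d i 0) < Im (gmap r d i (omega VG))"
    using fractal_gasket_ratio(1)[OF assms(1) \<open>i \<in> alph N\<close>] by (simp add: gmap_def)
  also have "\<dots> = Im (gmap r d j 0)"
    using meet \<open>u \<noteq> VG\<close> by (cases u) (simp_all add: gmap_def)
  finally show ?thesis .
qed

lemma top_isolated_imp_uv_isolated:
  assumes "top_isolated N r d K"
  shows "uv_isolated N r d K u v (idx N r d K VG)"
proof -
  let ?g = "idx N r d K VG"
  have "gmap r d ?g ` tri \<inter> gmap r d k ` tri = {}" if "k \<in> alph N" "k \<noteq> ?g" for k
    using assms that unfolding top_isolated_def by blast
  moreover have "gmap r d i (omega w) \<in> gmap r d i ` tri" for i w
    using omega_in_tri by blast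
  ultimately have "gmap r d i (omega v) \<noteq> gmap r d j (omega u)"
    if "i = ?g \<or> j = ?g" "i \<in> alph N" "j \<in> alph N" "i \<noteq> j" for i j
    using that by (metis disjoint_iff)
  then show ?thesis
    unfolding uv_isolated_def Puv_def delta_Id_to_S_def by blast
qed

theorem lemma5p1:
  fixes N :: int and r :: "int \<Rightarrow> real" and d :: "int \<Rightarrow> complex" and K :: "complex set"
  assumes "fractal_gasket N r d K"
    and "{omega VA, omega VB, omega VG} \<subseteq> K"
    and "top_isolated N r d K"
  shows "gamma_isolated N r d K"
proof -
  have "idx N r d K v \<in> alph N" for v
    using idx_fixes_vertex(1)[OF assms(1)] assms(2) by (cases v) auto
  moreover have "acyclic (Puv N r d K VA VG \<union> Puv N r d K VB VG)"
    by (rule acyclicI_order[where f = "\<lambda>i. - Im (gmap r d i 0)"])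
      (auto dest: Puv_VG_base_height_less[OF assms(1)])
  ultimately show ?thesis
    unfolding gamma_isolated_def using top_isolated_imp_uv_isolated[OF assms(3)] by blast
qed

end
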